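(* Let $a\in[-1,1)$. Let $M_2=\big(\int_{-1}^1t^{i+j}\,dt\big)_{0\le i,j\le2}$ and $v_a^{(2)}=\big(1-a,\ \tfrac{1-a^2}{2},\ \tfrac{1-a^3}{3}\big)^\top$. Then the linear equation $M_2x=v_a^{(2)}$ has a solution $x\in(0,\infty)^3$ if and only if $0<a<\frac{\sqrt{105}-5}{10}$. *)

theory Defs
  imports "HOL-Analysis.Analysis"
begin

definition Mmat :: "nat \<Rightarrow> nat \<Rightarrow> real" where
  "Mmat i j = integral {-1..1} (\<lambda>t::real. t ^ (i + j))"

definition vvec :: "real \<Rightarrow> nat \<Rightarrow> real" where
  "vvec a i = (1 - a ^ (i + 1)) / real (i + 1)"

end

theory Submission
  imports Defs
begin

text \<open>The moment matrix is invertible, so the system has exactly one solution,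
  \<open>x = ((1 - a)(4 - 5a(1 + a))/8, 3(1 - a)(1 + a)/4, 15a(1 - a)(1 + a)/8)\<close>.
  For \<open>-1 \<le> a < 1\<close> its components are positive iff \<open>a > 0\<close> and
  \<open>5a\<^sup>2 + 5a - 4 < 0\<close>, and the positive root of this quadratic is \<open>(\<surd>105 - 5)/10\<close>.\<close>

lemma integral_power_atLeastAtMost:
  fixes a b :: real
  assumes "a \<le> b"
  shows "integral {a..b} (\<lambda>t. t ^ k) = (b ^ Suc k - a ^ Suc k) / Suc k"
proof -
  have "((\<lambda>t. t ^ k) has_integral (b ^ Suc k / Suc k - a ^ Suc k / Suc k)) {a..b}"
  proof (rule fundamental_theorem_of_calculus[OF assms])
    fix t :: real
    have "((\<lambda>t. t ^ Suc k / Suc k) has_real_derivative t ^ k) (at t within {a..b})"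
      by (intro derivative_eq_intros) auto
    then show "((\<lambda>t. t ^ Suc k / Suc k) has_vector_derivative t ^ k) (at t within {a..b})"
      by (simp add: has_real_derivative_iff_has_vector_derivative)
  qed
  then show ?thesis
    by (simp add: integral_unique diff_divide_distrib)
qed

lemma Mmat_eq: "Mmat i j = (if even (i + j) then 2 / (i + j + 1) else 0)"
  by (simp add: Mmat_def integral_power_atLeastAtMost)

lemma mult_diff_neg_iff_between:
  fixes r s x :: "'a::linordered_idom"
  assumes "r \<le> s"
  shows "(x - r) * (x - s) < 0 \<longleftrightarrow> r < x \<and> x < s"
  using assms by (auto simp: mult_less_0_iff)

lemma quadratic_neg_iff:
  fixes a :: real
  shows "5 * a^2 + 5 * a - 4 < 0 \<longleftrightarrow> (- sqrt 105 - 5) / 10 < a \<and> a < (sqrt 105 - 5) / 10"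
proof -
  let ?r = "(- sqrt 105 - 5) / 10" and ?s = "(sqrt 105 - 5) / 10"
  have "5 * a^2 + 5 * a - 4 = 5 * ((a - ?r) * (a - ?s))"
    by (simp add: field_simps power2_eq_square)
  then have "5 * a^2 + 5 * a - 4 < 0 \<longleftrightarrow> (a - ?r) * (a - ?s) < 0"
    by linarith
  also have "\<dots> \<longleftrightarrow> ?r < a \<and> a < ?s"
    by (rule mult_diff_neg_iff_between) simp
  finally show ?thesis .
qed

definition moment_solution :: "real \<Rightarrow> nat \<Rightarrow> real" where
  "moment_solution a j =
     (if j = 0 then (1 - a) * (4 - 5 * a * (1 + a)) / 8
      else if j = 1 then 3 * (1 - a) * (1 + a) / 4
      else 15 * a * (1 - a) * (1 + a) / 8)"

lemma ball_atMost_2_iff: "(\<forall>j\<le>2. P j) \<longleftrightarrow> P 0 \<and> P 1 \<and> P (2::nat)"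
  by (auto simp: numeral_2_eq_2 le_Suc_eq)

lemma sum_atMost_2: "(\<Sum>j\<le>2. f j) = f 0 + f 1 + f (2::nat)"
  by (simp add: numeral_2_eq_2)

lemma moment_system_iff:
  "(\<forall>i\<le>2. (\<Sum>j\<le>2. Mmat i j * x j) = vvec a i) \<longleftrightarrow> (\<forall>j\<le>2. x j = moment_solution a j)"
proof -
  have "(\<forall>i\<le>2. (\<Sum>j\<le>2. Mmat i j * x j) = vvec a i) \<longleftrightarrow>
      2 * x 0 + 2/3 * x 2 = 1 - a \<and> 2/3 * x 1 = (1 - a^2) / 2 \<and> 2/3 * x 0 + 2/5 * x 2 = (1 - a^3) / 3"
    unfolding ball_atMost_2_iff sum_atMost_2 by (simp add: Mmat_eq vvec_def power2_eq_square)
  also have "\<dots> \<longleftrightarrow> (\<forall>j\<le>2. x j = moment_solution a j)"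
    unfolding ball_atMost_2_iff moment_solution_def
    by (auto simp: algebra_simps power2_eq_square power3_eq_cube)
  finally show ?thesis .
qed

lemma moment_solution_pos_iff:
  assumes "-1 \<le> a" and "a < 1"
  shows "(\<forall>j\<le>2. 0 < moment_solution a j) \<longleftrightarrow> 0 < a \<and> 5 * a^2 + 5 * a - 4 < 0"
proof -
  have "0 < 4 - 5 * a * (1 + a) \<longleftrightarrow> 5 * a^2 + 5 * a - 4 < 0"
    by (simp add: algebra_simps power2_eq_square)
  then show ?thesis
    unfolding ball_atMost_2_iff moment_solution_def using assms
    by (auto simp: zero_less_mult_iff)
qed

theorem lemma4p1:
  fixes a :: real
  assumes "-1 \<le> a" and "a < 1"
  shows "(\<exists>x :: nat \<Rightarrow> real. (\<forall>j\<le>2. x j > 0) \<and>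
            (\<forall>i\<le>2. (\<Sum>j\<le>2. Mmat i j * x j) = vvec a i))
         \<longleftrightarrow> (0 < a \<and> a < (sqrt 105 - 5) / 10)"
proof -
  have "(\<exists>x :: nat \<Rightarrow> real. (\<forall>j\<le>2. x j > 0) \<and>
            (\<forall>i\<le>2. (\<Sum>j\<le>2. Mmat i j * x j) = vvec a i))
        \<longleftrightarrow> (\<forall>j\<le>2. 0 < moment_solution a j)"
    unfolding moment_system_iff by auto
  also have "\<dots> \<longleftrightarrow> 0 < a \<and> 5 * a^2 + 5 * a - 4 < 0"
    using assms by (rule moment_solution_pos_iff)
  also have "\<dots> \<longleftrightarrow> 0 < a \<and> a < (sqrt 105 - 5) / 10"
  proof -
    have "0 < sqrt 105 + 5"
      by (simp add: add_nonneg_pos)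
    then have "(- sqrt 105 - 5) / 10 < 0"
      by simp
    then show ?thesis
      using quadratic_neg_iff[of a] by auto
  qed
  finally show ?thesis .
qed

end
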